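(* Strong admissibility semantics is serialisable with the selection function $\alpha_{gr}(X,Y,Z)=X$ and the termination function $\beta_{adm}(F,S)=1$ for all $F,S$.
   Context: An abstract argumentation framework (AF) is a pair $F=(A,R)$ with $A$ a finite subset of a fixed universal set of arguments $\mathfrak{A}$ and $R\subseteq A\times A$ ($a\to b$ means $(a,b)\in R$). For $S\subseteq A$: $S^+=\{a\mid \exists b\in S: b\to a\}$, $S^-=\{a\mid\exists b\in S: a\to b\}$; for sets $S,S'$, $S\to S'$ means $S^+\cap S'\neq\emptyset$. $S$ defends $b$ if every attacker of $b$ is attacked by some element of $S$; $S$ is admissible if it is conflict-free and defends all its elements. An admissible set $E$ is strongly admissible if $E=\emptyset$ or each $a\in E$ is defended by some strongly admissible $E'\subseteq E\setminus\{a\}$; strong admissibility semantics assigns to $F$ the set of its strongly admissible sets. An initial set is a non-empty admissible set with no non-empty admissible proper subset; $\mathrm{IS}(F)$ is the set of initial sets. An initial set $S$ is unattacked if $S^-=\emptyset$; unchallenged if $S^-\neq\emptyset$ and no $S'\in\mathrm{IS}(F)$ has $S'\to S$; challenged if some $S'\in\mathrm{IS}(F)$ has $S'\to S$. Write $\mathrm{IS}^{u}(F),\mathrm{IS}^{uc}(F),\mathrm{IS}^{c}(F)$ for these sets. The reduct is $F^S=(A',R\cap(A'\times A'))$ with $A'=A\setminus(S\cup S^+)$. A selection function $\alpha$ maps any three sets $X,Y,Z$ of sets of arguments to a subset of $X\cup Y\cup Z$; a termination function $\beta$ maps pairs $(F,S)$ to $\{0,1\}$. Transitions: $(F,S)\to(F^{S'},S\cup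 S')$ whenever $S'\in\alpha(\mathrm{IS}^u(F),\mathrm{IS}^{uc}(F),\mathrm{IS}^c(F))$. $(F,S)\leadsto^{\alpha,\beta}(F',S')$ means $(F',S')$ is reachable from $(F,S)$ in finitely many (possibly zero) transitions and $\beta(F',S')=1$. $\mathcal{E}^{\alpha,\beta}(F)$ is the set of all $S$ with $(F,\emptyset)\leadsto^{\alpha,\beta}(F',S)$ for some $F'$. A semantics $\sigma$ is serialisable with $\alpha,\beta$ if $\sigma(F)=\mathcal{E}^{\alpha,\beta}(F)$ for all AFs $F$. *)

theory Defs
  imports Main
begin

type_synonym 'a af = "'a set \<times> ('a \<times> 'a) set"

definition args :: "'a af \<Rightarrow> 'a set" where "args F = fst F"
definition atts :: "'a af \<Rightarrow> ('a \<times> 'a) set" where "atts F = snd F"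

definition wf_af :: "'a af \<Rightarrow> bool" where
  "wf_af F \<longleftrightarrow> finite (args F) \<and> atts F \<subseteq> args F \<times> args F"

definition plus :: "'a af \<Rightarrow> 'a set \<Rightarrow> 'a set" where
  "plus F S = {a. \<exists>b\<in>S. (b, a) \<in> atts F}"
definition minus :: "'a af \<Rightarrow> 'a set \<Rightarrow> 'a set" where
  "minus F S = {a. \<exists>b\<in>S. (a, b) \<in> atts F}"

definition set_attacks :: "'a af \<Rightarrow> 'a set \<Rightarrow> 'a set \<Rightarrow> bool" where
  "set_attacks F S S' \<longleftrightarrow> plus F S \<inter> S' \<noteq> {}"

definition defends :: "'a af \<Rightarrow> 'a set \<Rightarrow> 'a \<Rightarrow> bool" where
  "defends F S b \<longleftrightarrow> (\<forall>a. (a, b) \<in> atts F \<longrightarrow> (\<exists>c\<in>S. (c, a) \<in> atts F))"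

definition conflict_free :: "'a af \<Rightarrow> 'a set \<Rightarrow> bool" where
  "conflict_free F S \<longleftrightarrow> S \<subseteq> args F \<and> (\<forall>a\<in>S. \<forall>b\<in>S. (a, b) \<notin> atts F)"

definition admissible :: "'a af \<Rightarrow> 'a set \<Rightarrow> bool" where
  "admissible F S \<longleftrightarrow> conflict_free F S \<and> (\<forall>b\<in>S. defends F S b)"

text \<open>Strongly admissible sets (recursive definition; well-founded since
  E' is a proper subset of E when E is non-empty).\<close>
inductive strongly_admissible :: "'a af \<Rightarrow> 'a set \<Rightarrow> bool" for F where
  "admissible F E \<Longrightarrow>
   (E = {} \<or> (\<forall>a\<in>E. \<exists>E'. E' \<subseteq> E - {a} \<and> strongly_admissible F E' \<and> defends F E' a)) \<Longrightarrow>
   strongly_admissible F E"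

definition strong_adm :: "'a af \<Rightarrow> 'a set set" where
  "strong_adm F = {E. strongly_admissible F E}"

definition initial :: "'a af \<Rightarrow> 'a set \<Rightarrow> bool" where
  "initial F S \<longleftrightarrow> S \<noteq> {} \<and> admissible F S \<and>
     (\<forall>S'. S' \<subset> S \<and> S' \<noteq> {} \<longrightarrow> \<not> admissible F S')"

definition IS :: "'a af \<Rightarrow> 'a set set" where
  "IS F = {S. initial F S}"

definition IS_u :: "'a af \<Rightarrow> 'a set set" where
  "IS_u F = {S \<in> IS F. minus F S = {}}"

definition IS_uc :: "'a af \<Rightarrow> 'a set set" where
  "IS_uc F = {S \<in> IS F. minus F S \<noteq> {} \<and> \<not> (\<exists>S'\<in>IS F. set_attacks F S' S)}"

definition IS_c :: "'a af \<Rightarrow> 'a set set" where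
  "IS_c F = {S \<in> IS F. \<exists>S'\<in>IS F. set_attacks F S' S}"

definition reduct :: "'a af \<Rightarrow> 'a set \<Rightarrow> 'a af" where
  "reduct F S = (let A' = args F - (S \<union> plus F S) in (A', atts F \<inter> (A' \<times> A')))"

type_synonym 'a selection = "'a set set \<Rightarrow> 'a set set \<Rightarrow> 'a set set \<Rightarrow> 'a set set"
text \<open>Termination function: values in {0,1} are represented as bool (1 = True).\<close>
type_synonym 'a term_fun = "'a af \<Rightarrow> 'a set \<Rightarrow> bool"

definition selection_function :: "'a selection \<Rightarrow> bool" where
  "selection_function \<alpha> \<longleftrightarrow> (\<forall>X Y Z. \<alpha> X Y Z \<subseteq> X \<union> Y \<union> Z)"

definition trans_step :: "'a selection \<Rightarrow> 'a af \<times> 'a set \<Rightarrow> 'a af \<times> 'a set \<Rightarrow> bool" where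
  "trans_step \<alpha> c c' \<longleftrightarrow>
     (\<exists>S'\<in>\<alpha> (IS_u (fst c)) (IS_uc (fst c)) (IS_c (fst c)).
        c' = (reduct (fst c) S', snd c \<union> S'))"

definition leads :: "'a selection \<Rightarrow> 'a term_fun \<Rightarrow> 'a af \<times> 'a set \<Rightarrow> 'a af \<times> 'a set \<Rightarrow> bool" where
  "leads \<alpha> \<beta> c c' \<longleftrightarrow> (trans_step \<alpha>)\<^sup>*\<^sup>* c c' \<and> \<beta> (fst c') (snd c')"

definition ext_serial :: "'a selection \<Rightarrow> 'a term_fun \<Rightarrow> 'a af \<Rightarrow> 'a set set" where
  "ext_serial \<alpha> \<beta> F = {S. \<exists>F'. leads \<alpha> \<beta> (F, {}) (F', S)}"

definition serialisable :: "('a af \<Rightarrow> 'a set set) \<Rightarrow> 'a selection \<Rightarrow> 'a term_fun \<Rightarrow> bool" where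
  "serialisable \<sigma> \<alpha> \<beta> \<longleftrightarrow> (\<forall>F. wf_af F \<longrightarrow> \<sigma> F = ext_serial \<alpha> \<beta> F)"

definition alpha_gr :: "'a selection" where
  "alpha_gr X Y Z = X"

definition beta_adm :: "'a term_fun" where
  "beta_adm F S = True"

end

theory Submission
  imports Defs
begin

text \<open>In a finite framework a set is strongly admissible iff it can be built from the empty set by
  adding, one at a time, arguments defended by the part built so far: the witnesses E' of the
  recursive definition unfold into such constructions, which can be merged. On the other hand,
  for an admissible S the unattacked arguments of the reduct F^S are exactly the arguments
  outside S that S defends, the unattacked initial sets of F^S are their singletons, and
  reducing F^S by {a} gives F^(S \<union> {a}). Hence the states reachable from (F, {}) by grounded
  selection are precisely the pairs (F^S, S) with S built in this way, and since every state is
  accepted these S are the extensions.\<close>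

inductive defence_chain :: "'a af \<Rightarrow> 'a set \<Rightarrow> bool" for F where
  empty: "defence_chain F {}"
| insert: "defence_chain F S \<Longrightarrow> a \<in> args F \<Longrightarrow> defends F S a \<Longrightarrow> defence_chain F (insert a S)"

lemma defends_mono: "defends F S a \<Longrightarrow> S \<subseteq> T \<Longrightarrow> defends F T a"
  unfolding defends_def by blast

lemma admissible_defended_not_attacked:
  "admissible F S \<Longrightarrow> defends F S a \<Longrightarrow> c \<in> S \<Longrightarrow> (c, a) \<notin> atts F"
  unfolding admissible_def conflict_free_def defends_def by blast

lemma admissible_empty: "admissible F {}"
  by (simp add: admissible_def conflict_free_def)

lemma admissible_insert_defended:
  assumes adm: "admissible F S" and a: "a \<in> args F" and def: "defends F S a"
  shows "admissible F (insert a S)"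
proof -
  have not_attacked: "(c, a) \<notin> atts F" if "c \<in> S" for c
    using admissible_defended_not_attacked[OF adm def that] .
  then have no_self_attack: "(a, a) \<notin> atts F"
    using def unfolding defends_def by blast
  have not_attacking: "(a, c) \<notin> atts F" if "c \<in> S" for c
  proof
    assume "(a, c) \<in> atts F"
    moreover have "defends F S c"
      using adm that unfolding admissible_def by blast
    ultimately show False
      using not_attacked unfolding defends_def by blast
  qed
  have "conflict_free F (insert a S)"
    using adm a not_attacked no_self_attack not_attacking
    unfolding admissible_def conflict_free_def by blast
  moreover have "defends F (insert a S) b" if "b \<in> insert a S" for b
  proof (rule defends_mono)
    show "defends F S b"
      using adm def that unfolding admissible_def by blast
  qed blast
  ultimately show ?thesis
    unfolding admissible_def by blast
qed

lemma defence_chain_admissible: "defence_chain F S \<Longrightarrow> admissible F S"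
  by (induction rule: defence_chain.induct)
    (simp_all add: admissible_empty admissible_insert_defended)

lemma defence_chain_strongly_admissible: "defence_chain F S \<Longrightarrow> strongly_admissible F S"
proof (induction rule: defence_chain.induct)
  case empty
  show ?case
    by (rule strongly_admissible.intros) (simp_all add: admissible_empty)
next
  case (insert S a)
  show ?case
  proof (cases "a \<in> S")
    case True
    then show ?thesis
      using insert.IH by (simp add: insert_absorb)
  next
    case a_new: False
    have adm: "admissible F (insert a S)"
      by (rule defence_chain_admissible[OF defence_chain.insert[OF insert.hyps]])
    have old_witnesses: "\<exists>E'. E' \<subseteq> S - {x} \<and> strongly_admissible F E' \<and> defends F E' x"
      if "x \<in> S" for x
      using insert.IH that by (cases rule: strongly_admissible.cases) blast
    have "\<exists>E'. E' \<subseteq> insert a S - {x} \<and> strongly_admissible F E' \<and> defends F E' x"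
      if "x \<in> insert a S" for x
    proof (cases "x = a")
      case True
      then show ?thesis
        using a_new insert.IH insert.hyps(3) by (intro exI[of _ S]) auto
    next
      case False
      with that have "x \<in> S"
        by simp
      then obtain E' where "E' \<subseteq> S - {x}" "strongly_admissible F E'" "defends F E' x"
        using old_witnesses by blast
      then show ?thesis
        by (intro exI[of _ E']) auto
    qed
    then show ?thesis
      by (blast intro: strongly_admissible.intros[OF adm])
  qed
qed

lemma defence_chain_Un: "defence_chain F T \<Longrightarrow> defence_chain F S \<Longrightarrow> defence_chain F (S \<union> T)"
proof (induction rule: defence_chain.induct)
  case empty
  then show ?case by simp
next
  case (insert T a)
  have "defends F (S \<union> T) a"
    using insert.hyps(3) by (rule defends_mono) blast
  then have "defence_chain F (insert a (S \<union> T))"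
    using insert by (blast intro: defence_chain.insert)
  then show ?case by simp
qed

lemma defence_chain_UN:
  "finite B \<Longrightarrow> (\<And>b. b \<in> B \<Longrightarrow> defence_chain F (f b)) \<Longrightarrow> defence_chain F (\<Union>b\<in>B. f b)"
  by (induction rule: finite_induct) (simp_all add: defence_chain.empty defence_chain_Un)

lemma strongly_admissible_defence_chain:
  assumes fin: "finite (args F)"
  shows "strongly_admissible F E \<Longrightarrow> defence_chain F E"
proof (induction rule: strongly_admissible.induct)
  case (1 E)
  show ?case
  proof (cases "E = {}")
    case True
    then show ?thesis by (simp add: defence_chain.empty)
  next
    case False
    then obtain W where
      W: "\<And>a. a \<in> E \<Longrightarrow> W a \<subseteq> E - {a} \<and> defence_chain F (W a) \<and> defends F (W a) a"
      using "1"(2) by metis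
    have E_args: "E \<subseteq> args F"
      using "1"(1) unfolding admissible_def conflict_free_def by blast
    have "defence_chain F (\<Union>a\<in>E. insert a (W a))"
      using finite_subset[OF E_args fin] W E_args
      by (intro defence_chain_UN) (auto intro: defence_chain.insert)
    moreover have "(\<Union>a\<in>E. insert a (W a)) = E"
      using W by blast
    ultimately show ?thesis by simp
  qed
qed

lemma strongly_admissible_iff_defence_chain:
  "finite (args F) \<Longrightarrow> strongly_admissible F E \<longleftrightarrow> defence_chain F E"
  using strongly_admissible_defence_chain defence_chain_strongly_admissible by blast

lemma args_reduct: "args (reduct F S) = args F - (S \<union> plus F S)"
  unfolding reduct_def Let_def args_def by simp

lemma atts_reduct: "atts (reduct F S) = atts F \<inter> (args (reduct F S) \<times> args (reduct F S))"
  unfolding reduct_def Let_def atts_def args_def by simp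

lemma reduct_empty: "atts F \<subseteq> args F \<times> args F \<Longrightarrow> reduct F {} = F"
  unfolding reduct_def plus_def Let_def args_def atts_def by (cases F) auto

lemma reduct_reduct_singleton:
  "a \<in> args (reduct F S) \<Longrightarrow> reduct (reduct F S) {a} = reduct F (insert a S)"
  unfolding reduct_def Let_def args_def atts_def plus_def by auto

lemma IS_u_eq_unattacked_singletons:
  "IS_u G = {{a} |a. a \<in> args G \<and> (\<forall>b. (b, a) \<notin> atts G)}"
proof (intro set_eqI iffI)
  fix X assume "X \<in> IS_u G"
  then have X: "initial G X" "minus G X = {}"
    unfolding IS_u_def IS_def by auto
  then obtain a where "a \<in> X"
    unfolding initial_def by blast
  moreover have "a \<in> args G" "\<forall>b. (b, a) \<notin> atts G"
    using X \<open>a \<in> X\<close> unfolding initial_def admissible_def conflict_free_def minus_def by blast+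
  moreover from this have "admissible G {a}"
    unfolding admissible_def conflict_free_def defends_def by blast
  ultimately show "X \<in> {{a} |a. a \<in> args G \<and> (\<forall>b. (b, a) \<notin> atts G)}"
    using X(1) unfolding initial_def by blast
next
  fix X assume "X \<in> {{a} |a. a \<in> args G \<and> (\<forall>b. (b, a) \<notin> atts G)}"
  then obtain a where "X = {a}" "a \<in> args G" "\<forall>b. (b, a) \<notin> atts G"
    by blast
  then show "X \<in> IS_u G"
    unfolding IS_u_def IS_def initial_def admissible_def conflict_free_def defends_def minus_def
    by auto
qed

lemma unattacked_in_reduct_iff_defended:
  assumes wf: "wf_af F" and adm: "admissible F S"
  shows "a \<in> args (reduct F S) \<and> (\<forall>b. (b, a) \<notin> atts (reduct F S)) \<longleftrightarrow>
    a \<in> args F \<and> a \<notin> S \<and> defends F S a"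
proof
  assume unattacked: "a \<in> args (reduct F S) \<and> (\<forall>b. (b, a) \<notin> atts (reduct F S))"
  then have a: "a \<in> args F" "a \<notin> S" "a \<notin> plus F S"
    unfolding args_reduct by auto
  have "\<exists>c\<in>S. (c, b) \<in> atts F" if "(b, a) \<in> atts F" for b
  proof -
    have "b \<in> args F" "b \<notin> S"
      using that wf a(3) unfolding wf_af_def plus_def by blast+
    moreover have "(b, a) \<notin> atts (reduct F S)"
      using unattacked by blast
    ultimately have "b \<in> plus F S"
      using that unattacked unfolding atts_reduct args_reduct by blast
    then show ?thesis
      unfolding plus_def by blast
  qed
  with a show "a \<in> args F \<and> a \<notin> S \<and> defends F S a"
    unfolding defends_def by blast
next
  assume a: "a \<in> args F \<and> a \<notin> S \<and> defends F S a"
  then have "a \<notin> plus F S"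
    using admissible_defended_not_attacked[OF adm] unfolding plus_def by blast
  with a show "a \<in> args (reduct F S) \<and> (\<forall>b. (b, a) \<notin> atts (reduct F S))"
    unfolding args_reduct atts_reduct defends_def plus_def by auto
qed

lemma trans_step_alpha_gr_reduct:
  assumes "wf_af F" and "admissible F S"
  shows "trans_step alpha_gr (reduct F S, S) c \<longleftrightarrow>
    (\<exists>a\<in>args F. a \<notin> S \<and> defends F S a \<and> c = (reduct F (insert a S), insert a S))"
proof -
  note defended_iff = unattacked_in_reduct_iff_defended[OF assms]
  have IS_u: "IS_u (reduct F S) = {{a} |a. a \<in> args F \<and> a \<notin> S \<and> defends F S a}"
    unfolding IS_u_eq_unattacked_singletons defended_iff ..
  have reduct: "reduct (reduct F S) {a} = reduct F (insert a S)"
    if "a \<in> args F" "a \<notin> S" "defends F S a" for a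
    using that defended_iff[of a] by (intro reduct_reduct_singleton) blast
  show ?thesis
    unfolding trans_step_def alpha_gr_def fst_conv snd_conv IS_u
  proof
    assume "\<exists>S'\<in>{{a} |a. a \<in> args F \<and> a \<notin> S \<and> defends F S a}.
      c = (reduct (reduct F S) S', S \<union> S')"
    then obtain a where "a \<in> args F" "a \<notin> S" "defends F S a"
      and "c = (reduct (reduct F S) {a}, S \<union> {a})"
      by blast
    then show "\<exists>a\<in>args F. a \<notin> S \<and> defends F S a \<and> c = (reduct F (insert a S), insert a S)"
      using reduct by auto
  next
    assume "\<exists>a\<in>args F. a \<notin> S \<and> defends F S a \<and> c = (reduct F (insert a S), insert a S)"
    then obtain a where "a \<in> args F" "a \<notin> S" "defends F S a"
      and "c = (reduct F (insert a S), insert a S)"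
      by blast
    then show "\<exists>S'\<in>{{a} |a. a \<in> args F \<and> a \<notin> S \<and> defends F S a}.
      c = (reduct (reduct F S) S', S \<union> S')"
      using reduct by (intro bexI[of _ "{a}"]) auto
  qed
qed

lemma reachable_alpha_gr_imp_defence_chain:
  assumes wf: "wf_af F"
  shows "(trans_step alpha_gr)\<^sup>*\<^sup>* (F, {}) c \<Longrightarrow> fst c = reduct F (snd c) \<and> defence_chain F (snd c)"
proof (induction rule: rtranclp_induct)
  case base
  then show ?case
    using wf unfolding wf_af_def by (simp add: reduct_empty defence_chain.empty)
next
  case (step y z)
  obtain G S where y: "y = (G, S)"
    by fastforce
  with step.IH have S: "G = reduct F S" "defence_chain F S"
    by auto
  with step.hyps(2) obtain a where "a \<in> args F" "defends F S a"
    and "z = (reduct F (insert a S), insert a S)"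
    unfolding y using trans_step_alpha_gr_reduct[OF wf defence_chain_admissible] by blast
  with S(2) show ?case
    by (simp add: defence_chain.insert)
qed

lemma defence_chain_imp_reachable_alpha_gr:
  assumes wf: "wf_af F"
  shows "defence_chain F S \<Longrightarrow> (trans_step alpha_gr)\<^sup>*\<^sup>* (F, {}) (reduct F S, S)"
proof (induction rule: defence_chain.induct)
  case empty
  then show ?case
    using wf unfolding wf_af_def by (simp add: reduct_empty)
next
  case (insert S a)
  show ?case
  proof (cases "a \<in> S")
    case True
    then show ?thesis
      using insert.IH by (simp add: insert_absorb)
  next
    case False
    then have "trans_step alpha_gr (reduct F S, S) (reduct F (insert a S), insert a S)"
      using insert.hyps trans_step_alpha_gr_reduct[OF wf defence_chain_admissible] by blast
    with insert.IH show ?thesis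
      by (rule rtranclp.rtrancl_into_rtrancl)
  qed
qed

theorem theorem7:
  shows "serialisable strong_adm alpha_gr beta_adm"
  unfolding serialisable_def
proof (intro allI impI)
  fix F :: "'a af"
  assume wf: "wf_af F"
  have "ext_serial alpha_gr beta_adm F = {S. defence_chain F S}"
    unfolding ext_serial_def leads_def beta_adm_def
    using reachable_alpha_gr_imp_defence_chain[OF wf] defence_chain_imp_reachable_alpha_gr[OF wf]
    by fastforce
  also have "\<dots> = strong_adm F"
    using wf strongly_admissible_iff_defence_chain unfolding strong_adm_def wf_af_def by blast
  finally show "strong_adm F = ext_serial alpha_gr beta_adm F" ..
qed

end
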